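(* Let $\mathbb H$ be the real quaternion algebra, let $a,b,c\in\mathbb H$ be nonzero, and let $f(z)=z^2+azb+c$ be the two-sided polynomial evaluated as $f(z_0)=z_0^2+az_0b+c$. Then among the pure imaginary roots of $f$ there are at most two distinct norms; i.e. the number of pure imaginary roots of $f$ with pairwise distinct norms is at most two.
   Context: An element of $\mathbb H$ is pure imaginary if its real part is $0$; its norm is $N(q)=q\bar q$, which for pure imaginary $q$ equals $-q^2$. *)

theory Defs
  imports Main "HOL-Analysis.Analysis"
begin

record quat =
  Re :: real
  Im1 :: real
  Im2 :: real
  Im3 :: real

definition qzero :: quat where
  "qzero = \<lparr>Re = 0, Im1 = 0, Im2 = 0, Im3 = 0\<rparr>"

definition qadd :: "quat \<Rightarrow> quat \<Rightarrow> quat" where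
  "qadd x y = \<lparr>Re = Re x + Re y, Im1 = Im1 x + Im1 y,
               Im2 = Im2 x + Im2 y, Im3 = Im3 x + Im3 y\<rparr>"

definition qmult :: "quat \<Rightarrow> quat \<Rightarrow> quat" where
  "qmult x y = \<lparr>
     Re  = Re x * Re y - Im1 x * Im1 y - Im2 x * Im2 y - Im3 x * Im3 y,
     Im1 = Re x * Im1 y + Im1 x * Re y + Im2 x * Im3 y - Im3 x * Im2 y,
     Im2 = Re x * Im2 y - Im1 x * Im3 y + Im2 x * Re y + Im3 x * Im1 y,
     Im3 = Re x * Im3 y + Im1 x * Im2 y - Im2 x * Im1 y + Im3 x * Re y\<rparr>"

definition qcnj :: "quat \<Rightarrow> quat" where
  "qcnj q = \<lparr>Re = Re q, Im1 = - Im1 q, Im2 = - Im2 q, Im3 = - Im3 q\<rparr>"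

definition qnorm :: "quat \<Rightarrow> real" where
  "qnorm q = Re (qmult q (qcnj q))"

definition pure_imag :: "quat \<Rightarrow> bool" where
  "pure_imag q \<longleftrightarrow> Re q = 0"

definition twosided_f :: "quat \<Rightarrow> quat \<Rightarrow> quat \<Rightarrow> quat \<Rightarrow> quat" where
  "twosided_f a b c z = qadd (qadd (qmult z z) (qmult (qmult a z) b)) c"

end

theory Submission
  imports Defs
begin

text \<open>For a pure imaginary root z we have z^2 = -N(z), so the equation becomes
a z b = N(z) - c. Taking norms and using multiplicativity of N gives
N(a) N(b) N(z) = N(z)^2 - 2 Re(c) N(z) + N(c): the norm of every pure imaginary root
is a root of one fixed real quadratic, which has at most two roots.\<close>

lemma qnorm_eq_sum_squares: "qnorm q = Re q^2 + Im1 q^2 + Im2 q^2 + Im3 q^2"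
  by (simp add: qnorm_def qmult_def qcnj_def power2_eq_square)

lemma qnorm_mult: "qnorm (qmult x y) = qnorm x * qnorm y"
  unfolding qnorm_eq_sum_squares qmult_def by simp algebra

lemma qmult_self_pure_imag:
  assumes "pure_imag z"
  shows "qmult z z = \<lparr>Re = - qnorm z, Im1 = 0, Im2 = 0, Im3 = 0\<rparr>"
  using assms by (simp add: qmult_def qnorm_eq_sum_squares pure_imag_def power2_eq_square)

lemma finite_card_roots_monic_quadratic:
  fixes p q :: "'a::idom"
  shows "finite {t. t^2 + p*t + q = 0} \<and> card {t. t^2 + p*t + q = 0} \<le> 2"
proof (cases "{t. t^2 + p*t + q = 0} = {}")
  case True
  then show ?thesis by simp
next
  case False
  then obtain x where x: "x^2 + p*x + q = 0" by blast
  have "{t. t^2 + p*t + q = 0} \<subseteq> {x, -p-x}"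
  proof
    fix y assume "y \<in> {t. t^2 + p*t + q = 0}"
    then have "y^2 + p*y + q = x^2 + p*x + q" using x by simp
    then have "(y - x) * (y + x + p) = 0"
      by (simp add: algebra_simps power2_eq_square)
    then have "y - x = 0 \<or> y + x + p = 0" by simp
    then have "y = x \<or> y = -p-x"
      by (metis add.commute add_diff_cancel_left' diff_0 diff_diff_eq eq_iff_diff_eq_0)
    then show "y \<in> {x, -p-x}" by simp
  qed
  moreover have "card {x, -p-x} \<le> 2" by (simp add: card_insert_if)
  ultimately show ?thesis by (meson card_mono finite.emptyI finite.insertI finite_subset le_trans)
qed

lemma qnorm_pure_imag_root:
  assumes "pure_imag z" "twosided_f a b c z = qzero"
  shows "(qnorm z)^2 + (-(2*Re c + qnorm a * qnorm b)) * qnorm z + qnorm c = 0"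
proof -
  have azb: "qmult (qmult a z) b
      = \<lparr>Re = qnorm z - Re c, Im1 = - Im1 c, Im2 = - Im2 c, Im3 = - Im3 c\<rparr>"
    using assms(2) unfolding twosided_f_def qzero_def qadd_def qmult_self_pure_imag[OF assms(1)]
    by simp
  have "qnorm a * qnorm z * qnorm b = qnorm (qmult (qmult a z) b)"
    by (simp add: qnorm_mult)
  also have "\<dots> = (qnorm z - Re c)^2 + Im1 c^2 + Im2 c^2 + Im3 c^2"
    unfolding azb qnorm_eq_sum_squares by simp
  finally show ?thesis
    by (simp add: qnorm_eq_sum_squares[of c] algebra_simps power2_eq_square)
qed

theorem mainTheorem20:
  fixes a b c :: quat
  assumes "a \<noteq> qzero" and "b \<noteq> qzero" and "c \<noteq> qzero"
  shows "card (qnorm ` {z. pure_imag z \<and> twosided_f a b c z = qzero}) \<le> 2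
         \<and> finite (qnorm ` {z. pure_imag z \<and> twosided_f a b c z = qzero})"
proof -
  let ?Q = "{t. t^2 + (-(2*Re c + qnorm a * qnorm b)) * t + qnorm c = 0}"
  have "qnorm ` {z. pure_imag z \<and> twosided_f a b c z = qzero} \<subseteq> ?Q"
    using qnorm_pure_imag_root by blast
  moreover have "finite ?Q \<and> card ?Q \<le> 2"
    by (rule finite_card_roots_monic_quadratic)
  ultimately show ?thesis
    by (meson card_mono finite_subset le_trans)
qed

end
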